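(* Let $v>0$ and $0<q<v$, and for each integer $k$ with $0\le k<\sqrt{v/q}-1$ let $$\psi_{0,k}(r)=\left(1-q\,e^{-r}\right)e^{-\left(\frac{v}{2q(k+1)}-\frac{k+1}{2}\right)r}\;{}_2F_1\!\left(-k,\,\frac{v}{(k+1)q}+1;\,\frac{v}{(k+1)q}-k;\,q\,e^{-r}\right),\qquad r\in(\log q,\infty).$$ Let $j,n$ be integers with $1\le j\le n<\sqrt{v/q}-1$ and define $$\psi_{j,n}(r)=\frac{W\big(\psi_{0,0}(r),\psi_{0,1}(r),\dots,\psi_{0,j-1}(r),\psi_{0,n}(r)\big)}{W\big(\psi_{0,0}(r),\psi_{0,1}(r),\dots,\psi_{0,j-1}(r)\big)}.$$ Then $\psi_{j,n}$ is a nonzero constant multiple of $$e^{-\left(\frac{v}{2q(n+1)}-\frac{n+1}{2}\right)r}\left(1-q\,e^{-r}\right)^{j+1}\;{}_2F_1\!\left(j-n,\,j+1+\frac{v}{q(n+1)};\,\frac{v}{q(n+1)}-n;\,q\,e^{-r}\right),$$ and it satisfies $$-\psi_{j,n}''(r)+\left(\frac{j(j+1)\,q\,e^{-r}}{(1-q\,e^{-r})^2}-\frac{v\,e^{-r}}{1-q\,e^{-r}}\right)\psi_{j,n}(r)=-\left(\frac{v}{2q(n+1)}-\frac{n+1}{2}\right)^2\psi_{j,n}(r)\quad\text{on }(\log q,\infty).$$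
   Context: $W(f_1,\dots,f_k)=\det\big(f_i^{(l-1)}\big)_{i,l=1}^k$ denotes the Wronskian. ${}_2F_1(\alpha,\beta;\gamma;z)=\sum_{k\ge0}\frac{(\alpha)_k(\beta)_k}{(\gamma)_k k!}z^k$ is the Gauss hypergeometric function, $(a)_k$ the Pochhammer symbol. The $\psi_{0,k}$ are the bound-state eigenfunctions of $-\psi''-\frac{v e^{-r}}{1-qe^{-r}}\psi=\mathscr E\psi$ on $(\log q,\infty)$ with Dirichlet conditions at $\log q$ and $\infty$. *)

theory Defs
  imports "HOL-Analysis.Analysis" "Jordan_Normal_Form.Determinant"
begin

definition hyp2F1 :: "real \<Rightarrow> real \<Rightarrow> real \<Rightarrow> real \<Rightarrow> real" where
  "hyp2F1 a b c z = (\<Sum>k. pochhammer a k * pochhammer b k / (pochhammer c k * fact k) * z ^ k)"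

definition wronskian :: "nat \<Rightarrow> (nat \<Rightarrow> real \<Rightarrow> real) \<Rightarrow> real \<Rightarrow> real" where
  "wronskian m fs x = Determinant.det (mat m m (\<lambda>(i, l). (deriv ^^ l) (fs i) x))"

definition psi0 :: "real \<Rightarrow> real \<Rightarrow> nat \<Rightarrow> real \<Rightarrow> real" where
  "psi0 v q k r = (1 - q * exp (- r)) * exp (- ((v / (2 * q * (k + 1)) - (k + 1) / 2) * r))
      * hyp2F1 (- real k) (v / ((k + 1) * q) + 1) (v / ((k + 1) * q) - k) (q * exp (- r))"

definition psi :: "real \<Rightarrow> real \<Rightarrow> nat \<Rightarrow> nat \<Rightarrow> real \<Rightarrow> real" where
  "psi v q j n r = wronskian (j + 1) (\<lambda>i. if i < j then psi0 v q i else psi0 v q n) r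
                 / wronskian j (\<lambda>i. psi0 v q i) r"

end

theory Submission
  imports Defs
begin

(* Write x = q e^(-r), kappa_n = v/(2q(n+1)) - (n+1)/2 and
     g_(j,n)(r) = e^(-kappa_n r) (1 - x)^(j+1) F_(j,n)(x)      (eigenfun v q j n),
   where F_(j,n) is the terminating 2F1 of the statement, so that psi_(0,n) = g_(0,n).
   Let w_j = g_(j,j)' / g_(j,j) and M_j = (D - w_(j-1)) ... (D - w_0) with D = d/dr.
   A contiguous relation of 2F1 gives (D - w_j) g_(j,n) = (kappa_j - kappa_n) g_(j+1,n), and
   kappa_j > kappa_n for j < n; hence M_j psi_(0,n) is a nonzero multiple of g_(j,n), while
   M_j psi_(0,i) = 0 for i < j.  As M_j = D^j + (lower order terms), adding multiples of
   the first j columns of a Wronskian matrix to its last one gives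
     W(psi_(0,0), ..., psi_(0,j-1), f) = W(psi_(0,0), ..., psi_(0,j-1)) * M_j f,
   so psi_(j,n) = M_j psi_(0,n).  The differential equation for g_(j,n) is the
   hypergeometric equation for F_(j,n) rewritten in the variable r. *)

section \<open>Wronskians\<close>

lemma wronskian_cong:
  assumes "\<And>i. i < m \<Longrightarrow> fs i = gs i"
  shows "wronskian m fs x = wronskian m gs x"
  unfolding wronskian_def using assms by (intro arg_cong[where f = Determinant.det] eq_matI) auto

lemma det_add_to_last_column:
  fixes A :: "'a::comm_ring_1 mat" and c :: "nat \<Rightarrow> 'a"
  assumes A: "A \<in> carrier_mat (Suc j) (Suc j)" and c_last: "c j = 1"
  shows "det (mat (Suc j) (Suc j)
      (\<lambda>(i, l'). if l' = j then (\<Sum>l\<le>j. c l * A $$ (i, l)) else A $$ (i, l'))) = det A"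
proof -
  define E :: "'a mat"
    where "E = mat (Suc j) (Suc j) (\<lambda>(l, l'). if l' = j then c l else if l = l' then 1 else 0)"
  have E: "E \<in> carrier_mat (Suc j) (Suc j)"
    unfolding E_def by auto
  have "diag_mat E = map (\<lambda>_. 1) [0..<Suc j]"
    unfolding diag_mat_def E_def by (intro map_cong) (auto simp: c_last)
  then have "det E = 1"
    using det_upper_triangular[OF _ E] by (simp add: upper_triangular_def E_def map_replicate_const)
  moreover have "A * E = mat (Suc j) (Suc j)
      (\<lambda>(i, l'). if l' = j then (\<Sum>l\<le>j. c l * A $$ (i, l)) else A $$ (i, l'))" (is "_ = ?M")
  proof (rule eq_matI)
    fix i l' assume "i < dim_row ?M" "l' < dim_col ?M"
    then have i: "i < Suc j" and l': "l' < Suc j"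
      by simp_all
    have "(A * E) $$ (i, l') = (\<Sum>k<Suc j. A $$ (i, k) * E $$ (k, l'))"
      using i l' A E by (simp add: scalar_prod_def lessThan_atLeast0)
    also have "\<dots> = (\<Sum>k<Suc j. if l' = j then c k * A $$ (i, k) else if k = l' then A $$ (i, l') else 0)"
      using l' unfolding E_def by (intro sum.cong) auto
    finally show "(A * E) $$ (i, l') = ?M $$ (i, l')"
      using i l' by (simp add: lessThan_Suc_atMost)
  qed (use A E in auto)
  ultimately show ?thesis
    using det_mult[OF A E] by simp
qed

lemma wronskian_Suc_by_annihilator:
  fixes fs :: "nat \<Rightarrow> real \<Rightarrow> real" and c :: "nat \<Rightarrow> real"
  assumes c_last: "c j = 1"
    and annihilates: "\<And>i. i < j \<Longrightarrow> (\<Sum>l\<le>j. c l * (deriv ^^ l) (fs i) x) = 0"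
  shows "wronskian (Suc j) fs x = wronskian j fs x * (\<Sum>l\<le>j. c l * (deriv ^^ l) (fs j) x)"
proof -
  define M where "M = mat (Suc j) (Suc j) (\<lambda>(i, l'). if l' = j
      then (\<Sum>l\<le>j. c l * (deriv ^^ l) (fs i) x) else (deriv ^^ l') (fs i) x)"
  have M: "M \<in> carrier_mat (Suc j) (Suc j)"
    unfolding M_def by simp
  define B where "B = mat (Suc j) (Suc j) (\<lambda>(i, l). (deriv ^^ l) (fs i) x)"
  have "mat (Suc j) (Suc j) (\<lambda>(i, l'). if l' = j then (\<Sum>l\<le>j. c l * B $$ (i, l)) else B $$ (i, l')) = M"
    by (rule eq_matI) (auto simp: M_def B_def intro!: sum.cong)
  then have "wronskian (Suc j) fs x = det M"
    using det_add_to_last_column[of B j c] c_last unfolding wronskian_def B_def[symmetric]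
    by (simp add: B_def)
  also have "\<dots> = (\<Sum>i<Suc j. M $$ (i, j) * cofactor M i j)"
    by (rule laplace_expansion_column[OF M]) simp
  also have "\<dots> = M $$ (j, j) * cofactor M j j"
    by (subst sum.remove[of _ j]) (auto simp: M_def annihilates intro!: sum.neutral)
  also have "cofactor M j j = wronskian j fs x"
  proof -
    have "mat_delete M j j = mat j j (\<lambda>(i, l). (deriv ^^ l) (fs i) x)"
      by (rule eq_matI) (auto simp: M_def mat_delete_def)
    then show ?thesis
      unfolding cofactor_def wronskian_def by (simp flip: mult_2)
  qed
  finally show ?thesis
    by (simp add: M_def mult.commute)
qed

section \<open>Terminating hypergeometric series\<close>

definition hyp_coeff :: "real \<Rightarrow> real \<Rightarrow> real \<Rightarrow> nat \<Rightarrow> real" where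
  "hyp_coeff a b c k = pochhammer a k * pochhammer b k / (pochhammer c k * fact k)"

definition hyp_poly :: "real \<Rightarrow> real \<Rightarrow> real \<Rightarrow> nat \<Rightarrow> real poly" where
  "hyp_poly a b c N = (\<Sum>k\<le>N. monom (hyp_coeff a b c k) k)"

definition theta :: "real poly \<Rightarrow> real poly" where
  "theta p = pCons 0 (pderiv p)"

lemma hyp_coeff_0 [simp]: "hyp_coeff a b c 0 = 1"
  by (simp add: hyp_coeff_def)

lemma hyp_coeff_eq_0:
  assumes "a = - real N" "N < k"
  shows "hyp_coeff a b c k = 0"
  using assms by (simp add: hyp_coeff_def pochhammer_eq_0_iff)

lemma hyp_coeff_Suc:
  assumes "0 < c"
  shows "hyp_coeff a b c (Suc k) = hyp_coeff a b c k * (a + k) * (b + k) / ((c + k) * (k + 1))"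
  using pochhammer_pos[of c k] assms by (simp add: hyp_coeff_def pochhammer_Suc field_simps)

lemma hyp_coeff_Suc_shift:
  assumes "0 < c"
  shows "hyp_coeff a b c (Suc k) = a * b * hyp_coeff (a + 1) (b + 1) c k / ((c + k) * (k + 1))"
  using pochhammer_pos[of c k] assms
  by (simp add: hyp_coeff_def pochhammer_rec[of a] pochhammer_rec[of b] pochhammer_Suc[of c] field_simps)

lemma coeff_hyp_poly:
  assumes "a = - real N"
  shows "coeff (hyp_poly a b c N) k = hyp_coeff a b c k"
  using hyp_coeff_eq_0[OF assms, of k] by (auto simp: hyp_poly_def coeff_sum coeff_monom)

lemma hyp2F1_eq_poly_hyp_poly:
  assumes "a = - real N"
  shows "hyp2F1 a b c z = poly (hyp_poly a b c N) z"
proof -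
  have "hyp2F1 a b c z = (\<Sum>k\<le>N. hyp_coeff a b c k * z ^ k)"
    unfolding hyp2F1_def hyp_coeff_def[symmetric]
    by (rule suminf_finite) (use hyp_coeff_eq_0[OF assms] in auto)
  then show ?thesis
    by (simp add: hyp_poly_def poly_sum poly_monom)
qed

lemma coeff_theta: "coeff (theta p) k = real k * coeff p k"
  by (cases k) (simp_all add: theta_def coeff_pderiv)

lemma poly_theta: "poly (theta p) x = x * poly (pderiv p) x"
  by (simp add: theta_def)

lemma hyp_coeff_contiguous:
  fixes lam :: real
  assumes "0 < c" and lam: "lam * (a + b - c + 1) = - a * b"
  shows "(lam - real (Suc k)) * hyp_coeff a b c (Suc k)
       = lam * (hyp_coeff (a + 1) (b + 1) c (Suc k) - hyp_coeff (a + 1) (b + 1) c k)"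
proof -
  define G where "G = hyp_coeff (a + 1) (b + 1) c k"
  define D where "D = (c + k) * (k + 1)"
  have "D \<noteq> 0"
    using assms unfolding D_def by (simp add: add_pos_nonneg)
  have "lam * ((a + 1 + k) * (b + 1 + k) - D) - (lam - (k + 1)) * (a * b)
      = (k + 1) * (lam * (a + b - c + 1) + a * b)"
    unfolding D_def by (simp add: algebra_simps)
  then have key: "(lam - (k + 1)) * (a * b) = lam * ((a + 1 + k) * (b + 1 + k) - D)"
    using lam by simp
  have "(lam - real (Suc k)) * hyp_coeff a b c (Suc k) = (lam - (k + 1)) * (a * b) * G / D"
    unfolding G_def D_def hyp_coeff_Suc_shift[OF assms(1)] by simp
  also have "\<dots> = lam * ((a + 1 + k) * (b + 1 + k) - D) * G / D"
    by (simp only: key)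
  also have "\<dots> = lam * (G * (a + 1 + k) * (b + 1 + k) / D - G)"
    using \<open>D \<noteq> 0\<close> by (simp add: field_simps)
  also have "G * (a + 1 + k) * (b + 1 + k) / D = hyp_coeff (a + 1) (b + 1) c (Suc k)"
    unfolding G_def D_def by (rule hyp_coeff_Suc[OF assms(1), symmetric])
  finally show ?thesis
    unfolding G_def .
qed

lemma hyp_poly_contiguous:
  assumes a: "a = - real (Suc N)" and "0 < c" and lam: "lam * (a + b - c + 1) = - a * b"
  shows "Polynomial.smult lam (hyp_poly a b c (Suc N)) - theta (hyp_poly a b c (Suc N))
       = Polynomial.smult lam ([:1, -1:] * hyp_poly (a + 1) (b + 1) c N)"
proof (rule poly_eqI)
  fix k
  have a1: "a + 1 = - real N" "1 + a = - real N"
    using a by simp_all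
  have times_one_minus_x: "[:1, -1:] * p = p - pCons 0 p" for p :: "real poly"
    by (simp add: mult_pCons_left)
  show "coeff (Polynomial.smult lam (hyp_poly a b c (Suc N)) - theta (hyp_poly a b c (Suc N))) k
      = coeff (Polynomial.smult lam ([:1, -1:] * hyp_poly (a + 1) (b + 1) c N)) k"
    using hyp_coeff_contiguous[OF assms(2) lam, of "k - 1"]
    by (cases k) (simp_all add: times_one_minus_x coeff_theta coeff_hyp_poly[OF a]
        coeff_hyp_poly[OF a1(1)] coeff_hyp_poly[OF a1(2)] algebra_simps)
qed

text \<open>The hypergeometric equation \<open>\<theta> (\<theta> + c - 1) F = x (\<theta> + a) (\<theta> + b) F\<close>, \<open>\<theta> = x d/dx\<close>.\<close>

lemma hyp_poly_hypergeometric_eq: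
  assumes a: "a = - real N" and "0 < c"
  shows "theta (theta (hyp_poly a b c N)) + Polynomial.smult (c - 1) (theta (hyp_poly a b c N))
       = pCons 0 (theta (theta (hyp_poly a b c N)) + Polynomial.smult (a + b) (theta (hyp_poly a b c N))
                  + Polynomial.smult (a * b) (hyp_poly a b c N))"
proof (rule poly_eqI)
  fix k
  show "coeff (theta (theta (hyp_poly a b c N)) + Polynomial.smult (c - 1) (theta (hyp_poly a b c N))) k =
        coeff (pCons 0 (theta (theta (hyp_poly a b c N)) + Polynomial.smult (a + b) (theta (hyp_poly a b c N))
                        + Polynomial.smult (a * b) (hyp_poly a b c N))) k"
  proof (cases k)
    case (Suc i)
    have "(c + i) * (i + 1) * hyp_coeff a b c (Suc i) = (a + i) * (b + i) * hyp_coeff a b c i"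
      using assms(2) unfolding hyp_coeff_Suc[OF assms(2)] by (simp add: add_pos_nonneg)
    then show ?thesis
      using Suc by (simp add: coeff_theta coeff_hyp_poly[OF a] algebra_simps)
  qed (simp add: coeff_theta)
qed

section \<open>Functions of \<open>q e\<^sup>-\<^sup>r\<close> on the half-line \<open>r > ln q\<close>\<close>

lemma q_exp_less_1:
  fixes q r :: real
  assumes "0 < q" "ln q < r"
  shows "q * exp (- r) < 1"
proof -
  have "q * exp (- r) = exp (ln q - r)"
    using assms by (simp add: exp_diff exp_minus field_simps)
  then show ?thesis
    using assms by simp
qed

lemma one_minus_q_exp_neq_0:
  fixes q r :: real
  assumes "0 < q" "ln q < r"
  shows "1 - q * exp (- r) \<noteq> 0"
  using q_exp_less_1[OF assms] by simp

lemma DERIV_transfer_greaterThan: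
  assumes "a < r" and "\<And>s. a < s \<Longrightarrow> f s = g s" and "(g has_real_derivative D) (at r)"
  shows "(f has_real_derivative D) (at r)"
  by (rule has_field_derivative_transform_within_open[OF assms(3), of "{a<..}"]) (use assms in auto)

lemma DERIV_q_exp: "((\<lambda>r. q * exp (- r)) has_real_derivative - (q * exp (- r))) (at r)"
  by (auto intro!: derivative_eq_intros)

lemma DERIV_poly_q_exp:
  "((\<lambda>r. poly p (q * exp (- r))) has_real_derivative - poly (theta p) (q * exp (- r))) (at r)"
  using DERIV_chain2[OF poly_DERIV DERIV_q_exp, of p q r] by (simp add: poly_theta mult.commute)

lemma DERIV_one_minus_q_exp_power:
  assumes "1 - q * exp (- r) \<noteq> 0"
  shows "((\<lambda>r. (1 - q * exp (- r)) ^ m) has_real_derivative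
           m * (q * exp (- r) / (1 - q * exp (- r))) * (1 - q * exp (- r)) ^ m) (at r)"
proof -
  have "((\<lambda>r. (1 - q * exp (- r)) ^ m) has_real_derivative
          m * (1 - q * exp (- r)) ^ (m - 1) * (q * exp (- r))) (at r)"
    by (auto intro!: derivative_eq_intros)
  moreover have "m * (1 - q * exp (- r)) ^ (m - 1) * (q * exp (- r))
      = m * (q * exp (- r) / (1 - q * exp (- r))) * (1 - q * exp (- r)) ^ m"
    using assms by (cases m) (simp_all add: field_simps)
  ultimately show ?thesis
    by simp
qed

text \<open>Closure under \<open>d/dr\<close> is what keeps the coefficients of Crum operators differentiable.\<close>

definition qexp_rational :: "real \<Rightarrow> (real \<Rightarrow> real) \<Rightarrow> bool" where
  "qexp_rational q f \<longleftrightarrow>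
     (\<exists>p m. \<forall>r. ln q < r \<longrightarrow> f r = poly p (q * exp (- r)) / (1 - q * exp (- r)) ^ m)"

lemma qexp_rationalI:
  assumes "\<And>r. ln q < r \<Longrightarrow> f r = poly p (q * exp (- r)) / (1 - q * exp (- r)) ^ m"
  shows "qexp_rational q f"
  using assms unfolding qexp_rational_def by blast

lemma qexp_rationalE:
  assumes "qexp_rational q f"
  obtains p m where "\<And>r. ln q < r \<Longrightarrow> f r = poly p (q * exp (- r)) / (1 - q * exp (- r)) ^ m"
  using assms unfolding qexp_rational_def by auto

lemma qexp_rational_deriv:
  assumes q: "0 < q" and f: "qexp_rational q f"
  shows "qexp_rational q (deriv f)"
    and "\<And>r. ln q < r \<Longrightarrow> (f has_real_derivative deriv f r) (at r)"
proof -
  obtain p m where f_eq: "\<And>r. ln q < r \<Longrightarrow> f r = poly p (q * exp (- r)) / (1 - q * exp (- r)) ^ m"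
    using f by (auto elim: qexp_rationalE)
  define p' where "p' = - (theta p * [:1, -1:] + Polynomial.smult m (pCons 0 p))"
  have f': "(f has_real_derivative poly p' (q * exp (- r)) / (1 - q * exp (- r)) ^ Suc m) (at r)"
    if r: "ln q < r" for r
  proof -
    have ne: "1 - q * exp (- r) \<noteq> 0"
      using one_minus_q_exp_neq_0[OF q r] .
    have "((\<lambda>r. poly p (q * exp (- r)) / (1 - q * exp (- r)) ^ m) has_real_derivative
        ((- poly (theta p) (q * exp (- r))) * (1 - q * exp (- r)) ^ m
          - poly p (q * exp (- r)) * (m * (q * exp (- r) / (1 - q * exp (- r))) * (1 - q * exp (- r)) ^ m))
        / ((1 - q * exp (- r)) ^ m * (1 - q * exp (- r)) ^ m)) (at r)"
      using ne by (intro DERIV_divide DERIV_poly_q_exp DERIV_one_minus_q_exp_power) simp_all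
    also have "((- poly (theta p) (q * exp (- r))) * (1 - q * exp (- r)) ^ m
          - poly p (q * exp (- r)) * (m * (q * exp (- r) / (1 - q * exp (- r))) * (1 - q * exp (- r)) ^ m))
        / ((1 - q * exp (- r)) ^ m * (1 - q * exp (- r)) ^ m)
        = poly p' (q * exp (- r)) / (1 - q * exp (- r)) ^ Suc m"
      using ne by (simp add: p'_def field_simps power_add[symmetric] mult_2[symmetric])
    finally show ?thesis
      by (rule has_field_derivative_transform_within_open[where S = "{ln q<..}"])
        (use r f_eq in auto)
  qed
  have deriv_eq: "deriv f r = poly p' (q * exp (- r)) / (1 - q * exp (- r)) ^ Suc m"
    if "ln q < r" for r
    using DERIV_imp_deriv[OF f'[OF that]] .
  show "qexp_rational q (deriv f)"
    using deriv_eq by (rule qexp_rationalI)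
  show "(f has_real_derivative deriv f r) (at r)" if "ln q < r" for r
    using f'[OF that] deriv_eq[OF that] by simp
qed

lemma qexp_rational_const: "qexp_rational q (\<lambda>r. c)"
  by (rule qexp_rationalI[of _ _ "[:c:]" 0]) simp

lemma qexp_rational_add:
  assumes q: "0 < q" and "qexp_rational q f" "qexp_rational q g"
  shows "qexp_rational q (\<lambda>r. f r + g r)"
proof -
  obtain p m where f: "\<And>r. ln q < r \<Longrightarrow> f r = poly p (q * exp (- r)) / (1 - q * exp (- r)) ^ m"
    using assms(2) by (auto elim: qexp_rationalE)
  obtain p' m' where g: "\<And>r. ln q < r \<Longrightarrow> g r = poly p' (q * exp (- r)) / (1 - q * exp (- r)) ^ m'"
    using assms(3) by (auto elim: qexp_rationalE)
  have "poly ([:1, -1:] ^ k) x = (1 - x) ^ k" for k and x :: real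
    by (simp add: poly_power)
  then have "f r + g r = poly (p * [:1, -1:] ^ m' + p' * [:1, -1:] ^ m) (q * exp (- r))
                         / (1 - q * exp (- r)) ^ (m + m')" if r: "ln q < r" for r
    unfolding f[OF r] g[OF r] using one_minus_q_exp_neq_0[OF q r] by (simp add: field_simps power_add)
  then show ?thesis
    by (rule qexp_rationalI)
qed

lemma qexp_rational_mult:
  assumes q: "0 < q" and "qexp_rational q f" "qexp_rational q g"
  shows "qexp_rational q (\<lambda>r. f r * g r)"
proof -
  obtain p m where f: "\<And>r. ln q < r \<Longrightarrow> f r = poly p (q * exp (- r)) / (1 - q * exp (- r)) ^ m"
    using assms(2) by (auto elim: qexp_rationalE)
  obtain p' m' where g: "\<And>r. ln q < r \<Longrightarrow> g r = poly p' (q * exp (- r)) / (1 - q * exp (- r)) ^ m'"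
    using assms(3) by (auto elim: qexp_rationalE)
  have "f r * g r = poly (p * p') (q * exp (- r)) / (1 - q * exp (- r)) ^ (m + m')"
    if r: "ln q < r" for r
    unfolding f[OF r] g[OF r] using one_minus_q_exp_neq_0[OF q r] by (simp add: field_simps power_add)
  then show ?thesis
    by (rule qexp_rationalI)
qed

lemma qexp_rational_diff:
  assumes q: "0 < q" and "qexp_rational q f" "qexp_rational q g"
  shows "qexp_rational q (\<lambda>r. f r - g r)"
  using qexp_rational_add[OF q assms(2) qexp_rational_mult[OF q qexp_rational_const[of q "- 1"] assms(3)]]
  by simp

section \<open>Crum operators\<close>

definition smooth :: "(real \<Rightarrow> real) \<Rightarrow> bool" where
  "smooth h \<longleftrightarrow> (\<forall>l r. (deriv ^^ l) h differentiable (at r))"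

lemma smooth_DERIV: "smooth h \<Longrightarrow> ((deriv ^^ l) h has_real_derivative (deriv ^^ Suc l) h r) (at r)"
  unfolding smooth_def using DERIV_deriv_iff_real_differentiable by force

lemma smooth_exp_sum: "smooth (\<lambda>r. \<Sum>i\<in>S. c i * exp (a i * r))"
proof -
  have D: "((\<lambda>r. \<Sum>i\<in>S. c i * a i ^ l * exp (a i * r)) has_real_derivative
            (\<Sum>i\<in>S. c i * a i ^ Suc l * exp (a i * r))) (at r)" for l r
    by (rule DERIV_sum) (auto intro!: derivative_eq_intros simp: algebra_simps)
  have derivs: "(deriv ^^ l) (\<lambda>r. \<Sum>i\<in>S. c i * exp (a i * r))
      = (\<lambda>r. \<Sum>i\<in>S. c i * a i ^ l * exp (a i * r))" for l
  proof (induction l)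
    case (Suc l)
    then show ?case
      using DERIV_imp_deriv[OF D] by simp
  qed simp
  show ?thesis
    unfolding smooth_def derivs real_differentiable_def using D by blast
qed

lemma smooth_exp_poly: "smooth (\<lambda>r. exp (- (K * r)) * poly p (q * exp (- r)))"
proof -
  have "exp (- (K * r)) * poly p (q * exp (- r))
      = (\<Sum>i\<le>degree p. coeff p i * q ^ i * exp ((- K - i) * r))" for r
  proof -
    have "exp ((- K - i) * r) = exp (- (K * r)) * exp (- r) ^ i" for i :: nat
      by (simp add: algebra_simps flip: exp_add exp_of_nat_mult)
    then show ?thesis
      by (simp add: poly_altdef sum_distrib_left power_mult_distrib mult_ac)
  qed
  then show ?thesis
    using smooth_exp_sum[of "\<lambda>i. coeff p i * q ^ i" "\<lambda>i. - K - i" "{..degree p}"] by simp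
qed

text \<open>\<open>crum_op w j\<close> is the differential operator \<open>(D - w (j - 1)) \<circ> \<dots> \<circ> (D - w 0)\<close>, \<open>D = d/dr\<close>,
  expanded as \<open>\<Sum>l\<le>j. crum_coeff w j l * D\<^sup>l\<close>.\<close>

primrec crum_coeff :: "(nat \<Rightarrow> real \<Rightarrow> real) \<Rightarrow> nat \<Rightarrow> nat \<Rightarrow> real \<Rightarrow> real" where
  "crum_coeff w 0 l = (\<lambda>r. if l = 0 then 1 else 0)"
| "crum_coeff w (Suc j) l = (\<lambda>r. deriv (crum_coeff w j l) r
      + (if l = 0 then 0 else crum_coeff w j (l - 1) r) - w j r * crum_coeff w j l r)"

definition crum_op :: "(nat \<Rightarrow> real \<Rightarrow> real) \<Rightarrow> nat \<Rightarrow> (real \<Rightarrow> real) \<Rightarrow> real \<Rightarrow> real" where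
  "crum_op w j h r = (\<Sum>l\<le>j. crum_coeff w j l r * (deriv ^^ l) h r)"

lemma crum_coeff_eq_0: "j < l \<Longrightarrow> crum_coeff w j l = (\<lambda>r. 0)"
  by (induction j arbitrary: l) auto

lemma crum_coeff_diag: "crum_coeff w j j = (\<lambda>r. 1)"
  by (induction j) (simp_all add: crum_coeff_eq_0)

lemma qexp_rational_crum_coeff:
  assumes q: "0 < q" and w: "\<forall>k. qexp_rational q (w k)"
  shows "qexp_rational q (crum_coeff w j l)"
proof (induction j arbitrary: l)
  case 0
  show ?case
    by (simp add: qexp_rational_const)
next
  case (Suc j)
  have "qexp_rational q (\<lambda>r. if l = 0 then 0 else crum_coeff w j (l - 1) r)"
    by (cases "l = 0") (simp_all add: qexp_rational_const Suc.IH)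
  then show ?case
    using qexp_rational_deriv(1)[OF q Suc.IH]
    by (simp del: qexp_rational_def
        add: qexp_rational_diff[OF q] qexp_rational_add[OF q] qexp_rational_mult[OF q] w Suc.IH)
qed

lemma crum_op_0: "crum_op w 0 h = h"
  by (simp add: crum_op_def fun_eq_iff)

lemma DERIV_crum_op:
  assumes q: "0 < q" and w: "\<forall>k. qexp_rational q (w k)" and h: "smooth h" and r: "ln q < r"
  shows "(crum_op w j h has_real_derivative
           (\<Sum>l\<le>j. deriv (crum_coeff w j l) r * (deriv ^^ l) h r
                    + crum_coeff w j l r * (deriv ^^ Suc l) h r)) (at r)"
proof -
  have coeff: "(crum_coeff w j l has_real_derivative deriv (crum_coeff w j l) r) (at r)" for l
    using qexp_rational_deriv(2)[OF q qexp_rational_crum_coeff[OF q w] r] .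
  show ?thesis
    unfolding crum_op_def
    by (intro DERIV_sum) (rule DERIV_cong[OF DERIV_mult[OF coeff smooth_DERIV[OF h]]], simp)
qed

lemma crum_op_Suc:
  assumes q: "0 < q" and w: "\<forall>k. qexp_rational q (w k)" and h: "smooth h" and r: "ln q < r"
  shows "crum_op w (Suc j) h r = deriv (crum_op w j h) r - w j r * crum_op w j h r"
proof -
  let ?D = "\<lambda>l. (deriv ^^ l) h r"
  have last_0: "crum_coeff w j (Suc j) = (\<lambda>r. 0)"
    by (rule crum_coeff_eq_0) simp
  have "(\<Sum>l\<le>j. crum_coeff w j l r * ?D (Suc l))
      = (\<Sum>l\<le>Suc j. (if l = 0 then 0 else crum_coeff w j (l - 1) r) * ?D l)"
    by (subst sum.atMost_Suc_shift) simp
  then have "deriv (crum_op w j h) r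
      = (\<Sum>l\<le>Suc j. deriv (crum_coeff w j l) r * ?D l)
        + (\<Sum>l\<le>Suc j. (if l = 0 then 0 else crum_coeff w j (l - 1) r) * ?D l)"
    unfolding DERIV_imp_deriv[OF DERIV_crum_op[OF q w h r]] sum.distrib by (simp add: last_0)
  moreover have "crum_op w j h r = (\<Sum>l\<le>Suc j. crum_coeff w j l r * ?D l)"
    unfolding crum_op_def using last_0 by simp
  ultimately show ?thesis
    unfolding crum_op_def crum_coeff.simps
    by (simp add: algebra_simps sum.distrib sum_subtractf sum_distrib_left)
qed

lemma crum_op_Suc_eq_0:
  assumes q: "0 < q" and w: "\<forall>k. qexp_rational q (w k)" and h: "smooth h" and r: "ln q < r"
    and vanish: "\<And>s. ln q < s \<Longrightarrow> crum_op w j h s = 0"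
  shows "crum_op w (Suc j) h r = 0"
proof -
  have "deriv (crum_op w j h) r = 0"
    using DERIV_transfer_greaterThan[OF r vanish DERIV_const] by (rule DERIV_imp_deriv)
  then show ?thesis
    unfolding crum_op_Suc[OF q w h r] vanish[OF r] by simp
qed

section \<open>The functions \<open>g\<^sub>j\<^sub>,\<^sub>n\<close>\<close>

definition kappa :: "real \<Rightarrow> real \<Rightarrow> nat \<Rightarrow> real" where
  "kappa v q n = v / (2 * q * (n + 1)) - (n + 1) / 2"

lemma kappa_diff:
  "(kappa v q j - kappa v q n) * (2 * (real j + 1))
     = (real n - real j) * (real j + 1 + v / (q * (real n + 1)))"
proof -
  have "(v / (2 * q * J) - J / 2 - (v / (2 * q * N) - N / 2)) * (2 * J) = (N - J) * (J + v / (q * N))"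
    if "J \<noteq> 0" "N \<noteq> 0" for J N :: real
    using that by (cases "q = 0") (simp_all add: field_simps)
  from this[of "real j + 1" "real n + 1"] show ?thesis
    by (simp add: kappa_def)
qed

lemma kappa_less:
  assumes "0 \<le> v / q" and "j < n"
  shows "kappa v q n < kappa v q j"
proof -
  have "0 < (real n - real j) * (real j + 1 + v / (q * (real n + 1)))"
    using assms
    by (intro mult_pos_pos) (auto simp: add_pos_nonneg divide_nonneg_pos simp flip: divide_divide_eq_left)
  then show ?thesis
    by (simp flip: kappa_diff add: zero_less_mult_iff)
qed

lemma two_kappa: "2 * kappa v q n = v / (q * (real n + 1)) - real n - 1"
proof -
  have "2 * (v / (2 * X)) = v / X" for X :: real
    by simp
  then show ?thesis
    unfolding kappa_def right_diff_distrib mult.assoc by simp (simp add: field_simps)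
qed

lemma eigenpoly_param_pos:
  assumes "0 < q" and "real n * (real n + 1) < v / q"
  shows "0 < v / (q * (real n + 1)) - real n"
proof -
  have "real n * (q * (real n + 1)) < v"
    using assms by (simp add: pos_less_divide_eq mult_ac)
  then show ?thesis
    using assms by (simp add: pos_less_divide_eq)
qed

definition prefactor :: "real \<Rightarrow> nat \<Rightarrow> real \<Rightarrow> real \<Rightarrow> real" where
  "prefactor K m q r = exp (- (K * r)) * (1 - q * exp (- r)) ^ m"

definition prefactor_lderiv :: "real \<Rightarrow> nat \<Rightarrow> real \<Rightarrow> real \<Rightarrow> real" where
  "prefactor_lderiv K m q r = - K + m * (q * exp (- r) / (1 - q * exp (- r)))"

lemma DERIV_prefactor_mult:
  assumes "1 - q * exp (- r) \<noteq> 0" and "(H has_real_derivative H') (at r)"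
  shows "((\<lambda>r. prefactor K m q r * H r) has_real_derivative
           prefactor K m q r * (prefactor_lderiv K m q r * H r + H')) (at r)"
proof -
  have "((\<lambda>r. exp (- (K * r))) has_real_derivative - K * exp (- (K * r))) (at r)"
    by (auto intro!: derivative_eq_intros)
  from DERIV_mult[OF DERIV_mult[OF this DERIV_one_minus_q_exp_power[OF assms(1), of m]] assms(2)]
  show ?thesis
    unfolding prefactor_def prefactor_lderiv_def by (rule DERIV_cong) (simp add: algebra_simps)
qed

lemma DERIV_prefactor_lderiv:
  assumes "1 - q * exp (- r) \<noteq> 0"
  shows "(prefactor_lderiv K m q has_real_derivative
           - (m * (q * exp (- r) / (1 - q * exp (- r)) ^ 2))) (at r)"
proof -
  have "((\<lambda>r. 1 - q * exp (- r)) has_real_derivative q * exp (- r)) (at r)"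
    by (auto intro!: derivative_eq_intros)
  from DERIV_divide[OF DERIV_q_exp this assms]
  have "((\<lambda>r. q * exp (- r) / (1 - q * exp (- r))) has_real_derivative
          - (q * exp (- r) / (1 - q * exp (- r)) ^ 2)) (at r)"
    using assms by (simp add: field_simps power2_eq_square)
  from DERIV_add[OF DERIV_const[of "- K"] DERIV_cmult[OF this, of "real m"]]
  show ?thesis
    unfolding prefactor_lderiv_def[abs_def] by simp
qed

lemma qexp_rational_prefactor_lderiv:
  assumes "0 < q"
  shows "qexp_rational q (prefactor_lderiv K m q)"
proof (rule qexp_rationalI)
  fix r assume "ln q < r"
  then show "prefactor_lderiv K m q r = poly [:- K, K + m:] (q * exp (- r)) / (1 - q * exp (- r)) ^ 1"
    using one_minus_q_exp_neq_0[OF assms] by (simp add: prefactor_lderiv_def field_simps)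
qed

definition eigenpoly :: "real \<Rightarrow> real \<Rightarrow> nat \<Rightarrow> nat \<Rightarrow> real poly" where
  "eigenpoly v q j n = hyp_poly (real j - real n) (real j + 1 + v / (q * (n + 1))) (v / (q * (n + 1)) - n)
                         (n - j)"

definition eigenfun :: "real \<Rightarrow> real \<Rightarrow> nat \<Rightarrow> nat \<Rightarrow> real \<Rightarrow> real" where
  "eigenfun v q j n r = prefactor (kappa v q n) (j + 1) q r * poly (eigenpoly v q j n) (q * exp (- r))"

definition eigenfun_deriv :: "real \<Rightarrow> real \<Rightarrow> nat \<Rightarrow> nat \<Rightarrow> real \<Rightarrow> real" where
  "eigenfun_deriv v q j n r = prefactor (kappa v q n) (j + 1) q r *
     (prefactor_lderiv (kappa v q n) (j + 1) q r * poly (eigenpoly v q j n) (q * exp (- r))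
      - poly (theta (eigenpoly v q j n)) (q * exp (- r)))"

text \<open>The logarithmic derivative of \<open>eigenfun v q j j\<close>.\<close>

definition superpotential :: "real \<Rightarrow> real \<Rightarrow> nat \<Rightarrow> real \<Rightarrow> real" where
  "superpotential v q j = prefactor_lderiv (kappa v q j) (j + 1) q"

definition potential :: "real \<Rightarrow> real \<Rightarrow> nat \<Rightarrow> real \<Rightarrow> real" where
  "potential v q j r = j * (j + 1) * q * exp (- r) / (1 - q * exp (- r)) ^ 2
                       - v * exp (- r) / (1 - q * exp (- r))"

lemma eigenfun_eq_hyp2F1:
  fixes v q :: real and j n :: nat
  assumes "j \<le> n"
  shows "eigenfun v q j n r = exp (- ((v / (2 * q * (n + 1)) - (n + 1) / 2) * r))
              * (1 - q * exp (- r)) ^ (j + 1)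
              * hyp2F1 (real j - real n) (real j + 1 + v / (q * (n + 1))) (v / (q * (n + 1)) - n)
                  (q * exp (- r))"
proof -
  have a: "real j - real n = - real (n - j)"
    using assms by (simp add: of_nat_diff)
  show ?thesis
    unfolding eigenfun_def prefactor_def eigenpoly_def kappa_def hyp2F1_eq_poly_hyp_poly[OF a]
    by (simp only: of_nat_add of_nat_1)
qed

lemma psi0_eq_eigenfun: "psi0 v q k = eigenfun v q 0 k"
  by (rule ext) (simp add: psi0_def eigenfun_eq_hyp2F1 ac_simps)

lemma smooth_psi0: "smooth (psi0 v q k)"
proof -
  have "psi0 v q k r
      = exp (- (kappa v q k * r)) * poly ([:1, -1:] * eigenpoly v q 0 k) (q * exp (- r))" for r
    by (simp add: psi0_eq_eigenfun eigenfun_def prefactor_def left_diff_distrib)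
  then have "psi0 v q k
      = (\<lambda>r. exp (- (kappa v q k * r)) * poly ([:1, -1:] * eigenpoly v q 0 k) (q * exp (- r)))"
    by (rule ext)
  then show ?thesis
    by (simp only: smooth_exp_poly)
qed

lemma eigenpoly_diag: "eigenpoly v q j j = 1"
  by (simp add: eigenpoly_def hyp_poly_def one_pCons)

lemma eigenfun_diag_neq_0:
  assumes "0 < q" "ln q < r"
  shows "eigenfun v q j j r \<noteq> 0"
  using one_minus_q_exp_neq_0[OF assms] by (simp add: eigenfun_def eigenpoly_diag prefactor_def)

lemma DERIV_eigenfun:
  assumes "0 < q" "ln q < r"
  shows "(eigenfun v q j n has_real_derivative eigenfun_deriv v q j n r) (at r)"
  unfolding eigenfun_def[abs_def] eigenfun_deriv_def
  using DERIV_prefactor_mult[OF one_minus_q_exp_neq_0[OF assms] DERIV_poly_q_exp] by simp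

lemma eigenfun_deriv_minus_superpotential:
  "eigenfun_deriv v q j n r - superpotential v q j r * eigenfun v q j n r
     = prefactor (kappa v q n) (j + 1) q r
       * ((kappa v q j - kappa v q n) * poly (eigenpoly v q j n) (q * exp (- r))
          - poly (theta (eigenpoly v q j n)) (q * exp (- r)))"
  unfolding eigenfun_deriv_def eigenfun_def superpotential_def prefactor_lderiv_def
  by (simp add: algebra_simps)

lemma eigenfun_deriv_minus_superpotential_diag:
  "eigenfun_deriv v q j j r - superpotential v q j r * eigenfun v q j j r = 0"
  unfolding eigenfun_deriv_minus_superpotential eigenpoly_diag by (simp add: theta_def)

lemma eigenfun_deriv_minus_superpotential_less:
  assumes q: "0 < q" and bound: "real n * (real n + 1) < v / q" and "j < n"
  shows "eigenfun_deriv v q j n r - superpotential v q j r * eigenfun v q j n r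
       = (kappa v q j - kappa v q n) * eigenfun v q (Suc j) n r"
proof -
  define A where "A = v / (q * (real n + 1))"
  define lam where "lam = kappa v q j - kappa v q n"
  define N where "N = n - j - 1"
  have a: "real j - real n = - real (Suc N)"
    using \<open>j < n\<close> by (simp add: N_def of_nat_diff)
  have lam_eq: "lam * ((real j - real n) + (real j + 1 + A) - (A - real n) + 1)
      = - (real j - real n) * (real j + 1 + A)"
    using kappa_diff[of v q j n] unfolding lam_def A_def by (simp add: algebra_simps)
  have "Polynomial.smult lam (eigenpoly v q j n) - theta (eigenpoly v q j n)
      = Polynomial.smult lam ([:1, -1:] * eigenpoly v q (Suc j) n)"
  proof -
    have "eigenpoly v q j n = hyp_poly (real j - real n) (real j + 1 + A) (A - real n) (Suc N)"
      using \<open>j < n\<close> unfolding eigenpoly_def of_nat_add of_nat_1 A_def[symmetric]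
      by (simp add: N_def Suc_diff_Suc)
    moreover have "eigenpoly v q (Suc j) n
        = hyp_poly (real j - real n + 1) (real j + 1 + A + 1) (A - real n) N"
      unfolding eigenpoly_def of_nat_add of_nat_1 A_def[symmetric] by (simp add: N_def algebra_simps)
    ultimately show ?thesis
      using hyp_poly_contiguous[OF a eigenpoly_param_pos[OF q bound, folded A_def] lam_eq] by simp
  qed
  from arg_cong[OF this, of "\<lambda>p. poly p (q * exp (- r))"]
  have poly_eq: "lam * poly (eigenpoly v q j n) (q * exp (- r)) - poly (theta (eigenpoly v q j n)) (q * exp (- r))
      = lam * ((1 - q * exp (- r)) * poly (eigenpoly v q (Suc j) n) (q * exp (- r)))"
    by (simp add: left_diff_distrib)
  have prefactor_Suc: "prefactor (kappa v q n) (Suc j + 1) q r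
      = prefactor (kappa v q n) (j + 1) q r * (1 - q * exp (- r))"
    by (simp add: prefactor_def)
  have "eigenfun_deriv v q j n r - superpotential v q j r * eigenfun v q j n r
      = prefactor (kappa v q n) (j + 1) q r * (lam * poly (eigenpoly v q j n) (q * exp (- r))
          - poly (theta (eigenpoly v q j n)) (q * exp (- r)))"
    unfolding eigenfun_deriv_minus_superpotential lam_def ..
  also have "\<dots> = lam * eigenfun v q (Suc j) n r"
    unfolding poly_eq eigenfun_def prefactor_Suc by (simp only: mult_ac)
  finally show ?thesis
    unfolding lam_def .
qed

lemma eigenpoly_hypergeometric_eq:
  assumes q: "0 < q" and bound: "real n * (real n + 1) < v / q" and "j \<le> n"
  defines "F \<equiv> eigenpoly v q j n" and "K \<equiv> kappa v q n" and "m \<equiv> real j + 1"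
  shows "poly (theta (theta F)) x + 2 * K * poly (theta F) x
       = x * (poly (theta (theta F)) x + (2 * K + 2 * m) * poly (theta F) x
              + (2 * K * m + m\<^sup>2 - v / q) * poly F x)"
proof -
  define A where "A = v / (q * (real n + 1))"
  have a: "real j - real n = - real (n - j)"
    using \<open>j \<le> n\<close> by (simp add: of_nat_diff)
  have F_eq: "F = hyp_poly (real j - real n) (real j + 1 + A) (A - real n) (n - j)"
    unfolding F_def eigenpoly_def of_nat_add of_nat_1 A_def ..
  have two_K: "2 * K = A - real n - 1"
    unfolding K_def A_def by (rule two_kappa)
  have "v / (q * X) * X = v / q" if "X \<noteq> 0" for X :: real
    using that by (cases "q = 0") (simp_all add: field_simps)
  then have "v / q = A * (real n + 1)"
    unfolding A_def by simp
  then have ab: "2 * K * m + m\<^sup>2 - v / q = (real j - real n) * (real j + 1 + A)"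
    unfolding two_K m_def by (simp add: algebra_simps power2_eq_square)
  have a_plus_b: "2 * K + 2 * m = (real j - real n) + (real j + 1 + A)"
    unfolding two_K m_def by simp
  have "poly (theta (theta F)) x + (A - real n - 1) * poly (theta F) x
      = x * (poly (theta (theta F)) x + ((real j - real n) + (real j + 1 + A)) * poly (theta F) x
             + (real j - real n) * (real j + 1 + A) * poly F x)"
    using arg_cong[OF hyp_poly_hypergeometric_eq[OF a eigenpoly_param_pos[OF q bound, folded A_def],
          where b = "real j + 1 + A"], of "\<lambda>p. poly p x"]
    unfolding F_eq[symmetric] by (simp add: algebra_simps)
  then show ?thesis
    unfolding two_K[symmetric] ab a_plus_b .
qed

lemma schroedinger_of_hypergeometric:
  fixes x K m V F F1 F2 :: real
  assumes "x \<noteq> 1"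
    and hyp: "F2 + 2 * K * F1 = x * (F2 + (2 * K + 2 * m) * F1 + (2 * K * m + m\<^sup>2 - V) * F)"
  shows "(- K + m * (x / (1 - x))) * ((- K + m * (x / (1 - x))) * F - F1)
           + (- (m * (x / (1 - x)\<^sup>2)) * F + - F1 * (- K + m * (x / (1 - x))) - - F2)
         = ((m - 1) * m * x / (1 - x)\<^sup>2 - V * x / (1 - x) + K\<^sup>2) * F"
proof -
  define y where "y = 1 - x"
  have "y \<noteq> 0" and x: "x = 1 - y"
    using \<open>x \<noteq> 1\<close> unfolding y_def by simp_all
  have "(- K + m * (x / y)) * ((- K + m * (x / y)) * F - F1)
          + (- (m * (x / y\<^sup>2)) * F + - F1 * (- K + m * (x / y)) - - F2)
        - ((m - 1) * m * x / y\<^sup>2 - V * x / y + K\<^sup>2) * F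
      = (F2 + 2 * K * F1 - x * (F2 + (2 * K + 2 * m) * F1 + (2 * K * m + m\<^sup>2 - V) * F)) / y"
    using \<open>y \<noteq> 0\<close> unfolding x by (simp add: field_simps power2_eq_square)
  then show ?thesis
    using hyp unfolding y_def by simp
qed

lemma DERIV_eigenfun_deriv:
  assumes q: "0 < q" and bound: "real n * (real n + 1) < v / q" and "j \<le> n" and r: "ln q < r"
  shows "(eigenfun_deriv v q j n has_real_derivative
           (potential v q j r + kappa v q n ^ 2) * eigenfun v q j n r) (at r)"
proof -
  define x where "x = q * exp (- r)"
  define K where "K = kappa v q n"
  define F where "F = eigenpoly v q j n"
  define m where "m = real (j + 1)"
  have ne: "1 - q * exp (- r) \<noteq> 0"
    using one_minus_q_exp_neq_0[OF q r] .
  then have "x \<noteq> 1"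
    unfolding x_def by simp
  have hyp: "poly (theta (theta F)) x + 2 * K * poly (theta F) x
       = x * (poly (theta (theta F)) x + (2 * K + 2 * m) * poly (theta F) x
              + (2 * K * m + m\<^sup>2 - v / q) * poly F x)"
    unfolding F_def K_def m_def of_nat_add of_nat_1 by (rule eigenpoly_hypergeometric_eq[OF q bound \<open>j \<le> n\<close>])
  have L: "prefactor_lderiv K (j + 1) q r = - K + m * (x / (1 - x))"
    unfolding prefactor_lderiv_def x_def m_def ..
  have pot: "potential v q j r = (m - 1) * m * x / (1 - x)\<^sup>2 - v / q * x / (1 - x)"
    unfolding potential_def x_def m_def using q by simp
  have "(eigenfun_deriv v q j n has_real_derivative
      prefactor K (j + 1) q r *
        (prefactor_lderiv K (j + 1) q r * (prefactor_lderiv K (j + 1) q r * poly F x - poly (theta F) x)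
         + (- (m * (x / (1 - x)\<^sup>2)) * poly F x + - poly (theta F) x * prefactor_lderiv K (j + 1) q r
            - - poly (theta (theta F)) x))) (at r)"
    unfolding eigenfun_deriv_def[abs_def] K_def[symmetric] F_def[symmetric] x_def m_def
    by (rule DERIV_prefactor_mult[OF ne DERIV_diff[OF DERIV_mult[OF DERIV_prefactor_lderiv[OF ne]
          DERIV_poly_q_exp[of F]] DERIV_poly_q_exp[of "theta F"]]])
  then show ?thesis
    unfolding L schroedinger_of_hypergeometric[OF \<open>x \<noteq> 1\<close> hyp] pot
      eigenfun_def K_def[symmetric] F_def[symmetric] x_def[symmetric]
    by (simp only: mult_ac)
qed

section \<open>Crum's theorem\<close>

lemma qexp_rational_superpotential: "0 < q \<Longrightarrow> \<forall>k. qexp_rational q (superpotential v q k)"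
  unfolding superpotential_def by (simp add: qexp_rational_prefactor_lderiv)

lemma crum_op_Suc_psi0:
  assumes q: "0 < q" and r: "ln q < r"
    and c: "\<And>s. ln q < s \<Longrightarrow> crum_op (superpotential v q) j (psi0 v q k) s = c * eigenfun v q j n s"
  shows "crum_op (superpotential v q) (Suc j) (psi0 v q k) r
       = c * (eigenfun_deriv v q j n r - superpotential v q j r * eigenfun v q j n r)"
proof -
  have "deriv (crum_op (superpotential v q) j (psi0 v q k)) r = c * eigenfun_deriv v q j n r"
    using DERIV_transfer_greaterThan[OF r c DERIV_cmult[OF DERIV_eigenfun[OF q r]]]
    by (rule DERIV_imp_deriv)
  then show ?thesis
    unfolding crum_op_Suc[OF q qexp_rational_superpotential[OF q] smooth_psi0 r] c[OF r]
    by (simp add: algebra_simps)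
qed

lemma crum_op_psi0:
  assumes q: "0 < q" and bound: "real n * (real n + 1) < v / q" and "j \<le> n"
  shows "\<exists>c. c \<noteq> 0 \<and>
           (\<forall>r. ln q < r \<longrightarrow> crum_op (superpotential v q) j (psi0 v q n) r = c * eigenfun v q j n r)"
  using \<open>j \<le> n\<close>
proof (induction j)
  case 0
  show ?case
    by (intro exI[of _ 1]) (simp add: crum_op_0 psi0_eq_eigenfun)
next
  case (Suc j)
  then obtain c where "c \<noteq> 0"
    and c: "\<And>r. ln q < r \<Longrightarrow> crum_op (superpotential v q) j (psi0 v q n) r = c * eigenfun v q j n r"
    by auto
  have "j < n"
    using Suc.prems by simp
  have "0 \<le> real n * (real n + 1)"
    by simp
  then have "0 \<le> v / q"
    using bound by linarith
  then have "c * (kappa v q j - kappa v q n) \<noteq> 0"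
    using \<open>c \<noteq> 0\<close> kappa_less[OF _ \<open>j < n\<close>, of v q] by simp
  moreover have "crum_op (superpotential v q) (Suc j) (psi0 v q n) r
      = c * (kappa v q j - kappa v q n) * eigenfun v q (Suc j) n r" if "ln q < r" for r
    using crum_op_Suc_psi0[OF q that c] eigenfun_deriv_minus_superpotential_less[OF q bound \<open>j < n\<close>]
    by simp
  ultimately show ?case
    by blast
qed

lemma crum_op_psi0_below:
  assumes q: "0 < q" and bound: "real i * (real i + 1) < v / q" and "i < j" and r: "ln q < r"
  shows "crum_op (superpotential v q) j (psi0 v q i) r = 0"
proof -
  obtain c where c: "\<And>r. ln q < r \<Longrightarrow> crum_op (superpotential v q) i (psi0 v q i) r = c * eigenfun v q i i r"
    using crum_op_psi0[OF q bound order.refl] by auto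
  have "\<forall>s. ln q < s \<longrightarrow> crum_op (superpotential v q) k (psi0 v q i) s = 0" if "Suc i \<le> k" for k
    using that
  proof (induction k rule: dec_induct)
    case base
    show ?case
      using crum_op_Suc_psi0[OF q _ c] eigenfun_deriv_minus_superpotential_diag by simp
  next
    case (step k)
    then show ?case
      using crum_op_Suc_eq_0[OF q qexp_rational_superpotential[OF q] smooth_psi0] by blast
  qed
  then show ?thesis
    using \<open>i < j\<close> r by auto
qed

lemma mult_succ_mono: "i \<le> n \<Longrightarrow> real i * (real i + 1) \<le> real n * (real n + 1)"
  by (intro mult_mono) auto

lemma wronskian_Suc_psi0:
  assumes q: "0 < q" and bound: "real n * (real n + 1) < v / q" and "j \<le> n" and r: "ln q < r"
  shows "wronskian (Suc j) (\<lambda>i. if i < j then psi0 v q i else psi0 v q n) r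
       = wronskian j (psi0 v q) r * crum_op (superpotential v q) j (psi0 v q n) r"
proof -
  define fs where "fs = (\<lambda>i. if i < j then psi0 v q i else psi0 v q n)"
  have "wronskian (Suc j) fs r
      = wronskian j fs r * (\<Sum>l\<le>j. crum_coeff (superpotential v q) j l r * (deriv ^^ l) (fs j) r)"
  proof (rule wronskian_Suc_by_annihilator)
    show "crum_coeff (superpotential v q) j j r = 1"
      by (simp add: crum_coeff_diag)
  next
    fix i assume "i < j"
    have "real i * (real i + 1) < v / q"
      using mult_succ_mono[of i n] \<open>i < j\<close> \<open>j \<le> n\<close> bound by simp
    from crum_op_psi0_below[OF q this \<open>i < j\<close> r]
    show "(\<Sum>l\<le>j. crum_coeff (superpotential v q) j l r * (deriv ^^ l) (fs i) r) = 0"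
      using \<open>i < j\<close> unfolding crum_op_def fs_def by simp
  qed
  moreover have "wronskian j fs r = wronskian j (psi0 v q) r"
    by (rule wronskian_cong) (simp add: fs_def)
  ultimately show ?thesis
    unfolding crum_op_def fs_def by simp
qed

lemma wronskian_psi0_neq_0:
  assumes q: "0 < q" and bound: "real n * (real n + 1) < v / q" and "j \<le> n" and r: "ln q < r"
  shows "wronskian j (psi0 v q) r \<noteq> 0"
  using \<open>j \<le> n\<close>
proof (induction j)
  case 0
  show ?case
    by (simp add: wronskian_def det_dim_zero)
next
  case (Suc j)
  have bound_j: "real j * (real j + 1) < v / q"
    using mult_succ_mono[of j n] Suc.prems bound by simp
  obtain c where "c \<noteq> 0"
    and c: "crum_op (superpotential v q) j (psi0 v q j) r = c * eigenfun v q j j r"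
    using crum_op_psi0[OF q bound_j order.refl] r by auto
  have "wronskian (Suc j) (psi0 v q) r = wronskian (Suc j) (\<lambda>i. if i < j then psi0 v q i else psi0 v q j) r"
    by (rule wronskian_cong) (auto simp: less_Suc_eq)
  also have "\<dots> = wronskian j (psi0 v q) r * (c * eigenfun v q j j r)"
    unfolding wronskian_Suc_psi0[OF q bound_j order.refl r] c ..
  finally show ?case
    using Suc \<open>c \<noteq> 0\<close> eigenfun_diag_neq_0[OF q r] by simp
qed

lemma psi_eq_crum_op:
  assumes q: "0 < q" and bound: "real n * (real n + 1) < v / q" and "j \<le> n" and r: "ln q < r"
  shows "psi v q j n r = crum_op (superpotential v q) j (psi0 v q n) r"
  using wronskian_Suc_psi0[OF assms] wronskian_psi0_neq_0[OF assms] by (simp add: psi_def)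

lemma psi_eq_eigenfun:
  assumes q: "0 < q" and bound: "real n * (real n + 1) < v / q" and "j \<le> n"
  shows "\<exists>c. c \<noteq> 0 \<and> (\<forall>r. ln q < r \<longrightarrow> psi v q j n r = c * eigenfun v q j n r)"
  using crum_op_psi0[OF assms] psi_eq_crum_op[OF assms] by auto

lemma mult_succ_less_of_less_sqrt:
  assumes "real n + 1 < sqrt y"
  shows "real n * (real n + 1) < y"
proof -
  have "(real n + 1)\<^sup>2 < (sqrt y)\<^sup>2"
    using assms by (intro power_strict_mono) auto
  moreover have "0 < sqrt y"
    using assms of_nat_0_le_iff[of n] by linarith
  then have "0 \<le> y"
    by simp
  ultimately show ?thesis
    by (simp add: power2_eq_square algebra_simps)
qed

theorem mainTheorem3:
  fixes v q :: real and j n :: nat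
  assumes "v > 0" and "0 < q" and "q < v"
    and "1 \<le> j" and "j \<le> n" and "real n < sqrt (v / q) - 1"
  shows "(\<exists>c. c \<noteq> 0 \<and> (\<forall>r. ln q < r \<longrightarrow>
            psi v q j n r = c * (exp (- ((v / (2 * q * (n + 1)) - (n + 1) / 2) * r))
              * (1 - q * exp (- r)) ^ (j + 1)
              * hyp2F1 (real j - real n) (real j + 1 + v / (q * (n + 1))) (v / (q * (n + 1)) - n)
                  (q * exp (- r)))))
       \<and> (\<forall>r. ln q < r \<longrightarrow>
            psi v q j n differentiable (at r) \<and> deriv (psi v q j n) differentiable (at r) \<and>
            - deriv (deriv (psi v q j n)) r
              + (j * (j + 1) * q * exp (- r) / (1 - q * exp (- r)) ^ 2
                 - v * exp (- r) / (1 - q * exp (- r))) * psi v q j n r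
            = - (((v / (2 * q * (n + 1)) - (n + 1) / 2) ^ 2) * psi v q j n r))"
proof -
  have q: "0 < q" and "j \<le> n"
    using assms by simp_all
  have bound: "real n * (real n + 1) < v / q"
    using assms(6) by (intro mult_succ_less_of_less_sqrt) simp
  obtain c where "c \<noteq> 0" and psi_eq: "\<And>r. ln q < r \<Longrightarrow> psi v q j n r = c * eigenfun v q j n r"
    using psi_eq_eigenfun[OF q bound \<open>j \<le> n\<close>] by auto
  have psi': "(psi v q j n has_real_derivative c * eigenfun_deriv v q j n r) (at r)" if r: "ln q < r" for r
    using DERIV_transfer_greaterThan[OF r psi_eq DERIV_cmult[OF DERIV_eigenfun[OF q r]]] .
  have psi'': "(deriv (psi v q j n) has_real_derivative
      c * ((potential v q j r + kappa v q n ^ 2) * eigenfun v q j n r)) (at r)" if r: "ln q < r" for r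
    using DERIV_transfer_greaterThan[OF r DERIV_imp_deriv[OF psi']
        DERIV_cmult[OF DERIV_eigenfun_deriv[OF q bound \<open>j \<le> n\<close> r]]] .
  have schroedinger: "- deriv (deriv (psi v q j n)) r + potential v q j r * psi v q j n r
      = - (kappa v q n ^ 2 * psi v q j n r)" if r: "ln q < r" for r
    unfolding DERIV_imp_deriv[OF psi''[OF r]] psi_eq[OF r] by (simp add: algebra_simps)
  show ?thesis
    using \<open>c \<noteq> 0\<close> psi_eq psi' psi'' schroedinger
    unfolding eigenfun_eq_hyp2F1[OF \<open>j \<le> n\<close>] potential_def kappa_def of_nat_add of_nat_mult of_nat_1
    by (auto simp: real_differentiable_def)
qed

end
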